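(* Let $X$ be an $\mathcal M$-set, let $A,B\subset\omega$ be co-infinite, and let $x\in X$ be supported on both $A$ and $B$. Then $x$ is supported on $A\cap B$.
   Context: $\omega=\{1,2,3,\dots\}$, $\mathcal M$ is the monoid of injective maps $\omega\to\omega$, and an $\mathcal M$-set is a set with a left $\mathcal M$-action. For $A\subset\omega$, $\mathcal M_A$ is the submonoid of injections fixing $A$ elementwise; $x\in X$ is supported on $A$ if $f.x=x$ for all $f\in\mathcal M_A$. A set $A\subset\omega$ is co-infinite if $\omega\setminus A$ is infinite. *)

theory Defs
  imports Main
begin

definition omega :: "nat set" where
  "omega = {n. 1 \<le> n}"

text \<open>A map omega to omega is represented
  by a function nat to nat with the canonical convention f 0 = 0 (0 is not in omega),
  so that elements of M correspond bijectively to their representatives.\<close>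
definition injM :: "(nat \<Rightarrow> nat) set" where
  "injM = {f. f ` omega \<subseteq> omega \<and> inj_on f omega \<and> f 0 = 0}"

definition M_set :: "'a set \<Rightarrow> ((nat \<Rightarrow> nat) \<Rightarrow> 'a \<Rightarrow> 'a) \<Rightarrow> bool" where
  "M_set X act \<longleftrightarrow>
     (\<forall>f\<in>injM. \<forall>x\<in>X. act f x \<in> X) \<and>
     (\<forall>x\<in>X. act id x = x) \<and>
     (\<forall>f\<in>injM. \<forall>g\<in>injM. \<forall>x\<in>X. act (f \<circ> g) x = act f (act g x))"

definition M_fix :: "nat set \<Rightarrow> (nat \<Rightarrow> nat) set" where
  "M_fix A = {f \<in> injM. \<forall>a\<in>A. f a = a}"

definition supported_on :: "((nat \<Rightarrow> nat) \<Rightarrow> 'a \<Rightarrow> 'a) \<Rightarrow> 'a \<Rightarrow> nat set \<Rightarrow> bool" where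
  "supported_on act x A \<longleftrightarrow> (\<forall>f\<in>M_fix A. act f x = x)"

definition co_infinite :: "nat set \<Rightarrow> bool" where
  "co_infinite A \<longleftrightarrow> infinite (omega - A)"

end

theory Submission
  imports Defs "HOL-Library.Infinite_Set"
begin

text \<open>If \<open>x\<close> is supported on a co-infinite set \<open>A\<close>, then \<open>f.x\<close> depends only on the
  restriction of \<open>f\<close> to \<open>A\<close>: two injections agreeing on \<open>A\<close> both factor, through
  elements of \<open>\<M>\<^sub>A\<close>, via a single injection \<open>t\<close> that agrees with them on \<open>A\<close> and whose
  image contains both of theirs; \<open>t\<close> exists because the complement of \<open>A\<close> is infinite.
  For \<open>f \<in> \<M>\<^sub>A\<^sub>\<inter>\<^sub>B\<close> it therefore suffices to connect \<open>f\<close> to the identity by a chain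
  \<open>f, g, k, h, id\<close> in which consecutive maps agree alternately on \<open>A\<close> and on \<open>B\<close>. Take
  \<open>g\<close> extending \<open>f\<close> on \<open>A\<close> and \<open>h\<close> extending the identity on \<open>B\<close>, with their images
  off \<open>A\<close> resp. off \<open>B\<close> an infinite set \<open>W\<close> and its infinite complement in the complement
  of \<open>B\<close>; then \<open>g\<close> on \<open>B\<close> and \<open>h\<close> off \<open>B\<close> have disjoint images and glue to \<open>k\<close>.\<close>

lemma infinite_nat_set_split:
  fixes S :: "nat set"
  assumes "infinite S"
  obtains S1 where "S1 \<subseteq> S" "infinite S1" "infinite (S - S1)"
proof
  let ?e = "enumerate S"
  have inj_e: "inj ?e"
    using strict_mono_enumerate[OF assms] strict_mono_imp_inj_on by blast
  have inj_even: "inj (\<lambda>n. ?e (2 * n))" and inj_odd: "inj (\<lambda>n. ?e (2 * n + 1))"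
    by (auto intro!: injI dest!: injD[OF inj_e])
  show "range (\<lambda>n. ?e (2 * n)) \<subseteq> S"
    using enumerate_in_set[OF assms] by auto
  show "infinite (range (\<lambda>n. ?e (2 * n)))"
    using range_inj_infinite[OF inj_even] .
  have "?e (2 * m + 1) \<noteq> ?e (2 * n)" for m n
  proof
    assume "?e (2 * m + 1) = ?e (2 * n)"
    then have "2 * m + 1 = 2 * n"
      by (rule injD[OF inj_e])
    then show False
      by presburger
  qed
  then have "range (\<lambda>n. ?e (2 * n + 1)) \<subseteq> S - range (\<lambda>n. ?e (2 * n))"
    using enumerate_in_set[OF assms] by auto
  then show "infinite (S - range (\<lambda>n. ?e (2 * n)))"
    using range_inj_infinite[OF inj_odd] finite_subset by blast
qed

lemma infinite_subset_with_infinite_remainder: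
  fixes W D :: "nat set"
  assumes "infinite W" "infinite D"
  obtains W1 where "W1 \<subseteq> W" "infinite W1" "infinite (D - W1)"
proof (cases "finite (W - D)")
  case True
  have "W = (W - D) \<union> (W \<inter> D)"
    by blast
  then have "infinite (W \<inter> D)"
    using True assms(1) by (metis finite_Un)
  then obtain S1 where S1: "S1 \<subseteq> W \<inter> D" "infinite S1" "infinite (W \<inter> D - S1)"
    by (rule infinite_nat_set_split)
  moreover have "W \<inter> D - S1 \<subseteq> D - S1"
    by blast
  ultimately have "infinite (D - S1)"
    using finite_subset by blast
  with S1 show ?thesis using that by blast
next
  case False
  then show ?thesis
    using that[of "W - D"] assms(2) by (simp add: Diff_triv)
qed

lemma zero_notin_omega: "0 \<notin> omega"
  by (simp add: omega_def)

lemma id_in_injM: "id \<in> injM"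
  by (simp add: injM_def)

lemma injM_D:
  assumes "f \<in> injM"
  shows "f ` omega \<subseteq> omega" "inj_on f omega" "f 0 = 0"
  using assms by (auto simp: injM_def)

lemma injM_image_co_infinite:
  assumes "f \<in> injM" "co_infinite A"
  shows "infinite (f ` (omega - A))"
proof -
  have "inj_on f (omega - A)"
    using injM_D(2)[OF assms(1)] by (rule inj_on_subset) blast
  then show ?thesis
    using assms(2) by (simp add: finite_image_iff co_infinite_def)
qed

lemma injM_image_Diff:
  assumes "f \<in> injM" "A \<subseteq> omega"
  shows "f ` (omega - A) = f ` omega - f ` A"
  using inj_on_image_set_diff[OF injM_D(2)[OF assms(1)]] assms(2) by blast

lemma if_in_injM:
  assumes "S \<subseteq> omega" "g ` S \<subseteq> omega" "inj_on g S" "h \<in> injM"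
    and disjoint: "g ` S \<inter> h ` (omega - S) = {}"
  shows "(\<lambda>n. if n \<in> S then g n else h n) \<in> injM"
proof -
  let ?k = "\<lambda>n. if n \<in> S then g n else h n"
  have "inj_on ?k S" "inj_on ?k (omega - S)"
    using assms(3) injM_D(2)[OF assms(4)] by (auto simp: inj_on_def)
  moreover have "?k ` S \<inter> ?k ` (omega - S) = {}"
    using disjoint by auto
  moreover have "S - (omega - S) = S" "omega - S - S = omega - S"
    using assms(1) by blast+
  ultimately have "inj_on ?k (S \<union> (omega - S))"
    by (simp only: inj_on_Un)
  moreover have "S \<union> (omega - S) = omega"
    using assms(1) by blast
  ultimately show ?thesis
    using assms(2) injM_D[OF assms(4)] zero_notin_omega assms(1) by (auto simp: injM_def)
qed

lemma injM_extension:
  assumes "A \<subseteq> omega" "co_infinite A" "f \<in> injM"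
    and "T \<subseteq> omega" "infinite T" "T \<inter> f ` A = {}"
  obtains t where "t \<in> injM" "\<forall>a\<in>A. t a = f a" "t ` (omega - A) = T"
proof -
  obtain e where e: "bij_betw e (omega - A) T"
    using bij_betw_trans[OF bij_betw_inv_into[OF bij_enumerate] bij_enumerate] assms(2,5)
    unfolding co_infinite_def by blast
  let ?t = "\<lambda>n. if n \<in> omega - A then e n else f n"
  have "omega - (omega - A) = A"
    using assms(1) by blast
  then have "?t \<in> injM"
    using if_in_injM[of "omega - A" e f] e assms(3,4,6) by (auto simp: bij_betw_def)
  moreover have "\<forall>a\<in>A. ?t a = f a" "?t ` (omega - A) = T"
    using e by (auto simp: bij_betw_def)
  ultimately show ?thesis
    by (rule that)
qed

lemma injM_factor_through:
  assumes "g \<in> injM" "t \<in> injM" "g ` omega \<subseteq> t ` omega"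
    and "A \<subseteq> omega" "\<forall>a\<in>A. g a = t a"
  obtains v where "v \<in> M_fix A" "g = t \<circ> v"
proof
  define v where "v n = (if n \<in> omega then inv_into omega t (g n) else 0)" for n
  have t_v: "t (v n) = g n" for n
  proof (cases "n \<in> omega")
    case True
    then show ?thesis
      using assms(3) by (auto simp: v_def f_inv_into_f)
  next
    case False
    then have "n = 0"
      by (simp add: omega_def)
    with False show ?thesis
      using injM_D(3)[OF assms(1)] injM_D(3)[OF assms(2)] by (simp add: v_def)
  qed
  have v_omega: "v ` omega \<subseteq> omega"
    using assms(3) by (auto simp: v_def inv_into_into)
  have "inj_on v omega"
    by (rule inj_onI) (metis t_v injM_D(2)[OF assms(1)] inj_onD)
  then have "v \<in> injM"
    using v_omega zero_notin_omega by (simp add: injM_def v_def)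
  moreover have "v a = a" if "a \<in> A" for a
    using t_v[of a] assms(4,5) that v_omega injM_D(2)[OF assms(2)] by (auto dest: inj_onD)
  ultimately show "v \<in> M_fix A"
    by (simp add: M_fix_def)
  show "g = t \<circ> v"
    using t_v by auto
qed

lemma supported_action_eq_of_range_subset:
  assumes "M_set X act" "x \<in> X" "supported_on act x A" "A \<subseteq> omega"
    and "g \<in> injM" "t \<in> injM" "g ` omega \<subseteq> t ` omega" "\<forall>a\<in>A. g a = t a"
  shows "act g x = act t x"
proof -
  obtain v where v: "v \<in> M_fix A" "g = t \<circ> v"
    using injM_factor_through assms(4-8) by blast
  then have "act g x = act t (act v x)"
    using assms(1,2,6) by (simp add: M_set_def M_fix_def)
  also have "act v x = x"
    using assms(3) v(1) by (simp add: supported_on_def)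
  finally show ?thesis .
qed

lemma supported_action_eq:
  assumes "M_set X act" "x \<in> X" "supported_on act x A" "A \<subseteq> omega" "co_infinite A"
    and "g \<in> injM" "h \<in> injM" "\<forall>a\<in>A. g a = h a"
  shows "act g x = act h x"
proof -
  let ?T = "g ` (omega - A) \<union> h ` (omega - A)"
  have g_h_A: "h ` A = g ` A"
    using assms(8) by force
  have "?T \<subseteq> omega"
    using injM_D(1) assms(6,7) by blast
  moreover have "infinite ?T"
    using injM_image_co_infinite[OF assms(6,5)] by simp
  moreover have "?T \<inter> g ` A = {}"
    unfolding injM_image_Diff[OF assms(6,4)] injM_image_Diff[OF assms(7,4)] g_h_A by blast
  ultimately obtain t where t: "t \<in> injM" "\<forall>a\<in>A. t a = g a" "t ` (omega - A) = ?T"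
    by (rule injM_extension[OF assms(4-6)])
  have image_split: "f ` omega = f ` A \<union> f ` (omega - A)" for f :: "nat \<Rightarrow> nat"
    using assms(4) by blast
  have "t ` A = g ` A"
    using t(2) by force
  then have t_omega: "t ` omega = g ` A \<union> ?T"
    using t(3) image_split[of t] by simp
  have "g ` omega \<subseteq> t ` omega" "h ` omega \<subseteq> t ` omega"
    unfolding t_omega image_split[of g] image_split[of h] g_h_A by blast+
  moreover have "\<forall>a\<in>A. g a = t a" "\<forall>a\<in>A. h a = t a"
    using t(2) assms(8) by simp_all
  ultimately have "act g x = act t x" "act h x = act t x"
    using supported_action_eq_of_range_subset[OF assms(1-4) _ t(1)] assms(6,7) by blast+
  then show ?thesis
    by simp
qed

lemma M_fix_Int_chain:
  assumes "A \<subseteq> omega" "B \<subseteq> omega" "co_infinite A" "co_infinite B" "f \<in> M_fix (A \<inter> B)"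
  obtains g k h where "g \<in> injM" "k \<in> injM" "h \<in> M_fix B"
    "\<forall>a\<in>A. g a = f a" "\<forall>b\<in>B. k b = g b" "\<forall>a\<in>A. k a = h a"
proof -
  have f: "f \<in> injM" "\<forall>a\<in>A \<inter> B. f a = a"
    using assms(5) by (auto simp: M_fix_def)
  have "f ` (omega - A) \<subseteq> omega - f ` A"
    using injM_image_Diff[OF f(1) assms(1)] injM_D(1)[OF f(1)] by blast
  then have "infinite (omega - f ` A)"
    using injM_image_co_infinite[OF f(1) assms(3)] finite_subset by blast
  then obtain W where W: "W \<subseteq> omega - f ` A" "infinite W" "infinite (omega - B - W)"
    using infinite_subset_with_infinite_remainder assms(4) unfolding co_infinite_def by blast
  obtain g where g: "g \<in> injM" "\<forall>a\<in>A. g a = f a" "g ` (omega - A) = W"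
    using injM_extension[OF assms(1,3) f(1)] W by blast
  obtain h where h: "h \<in> injM" "\<forall>b\<in>B. h b = b" "h ` (omega - B) = omega - B - W"
    using injM_extension[OF assms(2,4) id_in_injM, of "omega - B - W"] W(3) by auto
  have "g ` B \<subseteq> B \<union> W"
    using g(2,3) f(2) assms(2) by fastforce
  then have "g ` B \<inter> h ` (omega - B) = {}"
    using h(3) by blast
  moreover have "g ` B \<subseteq> omega" "inj_on g B"
    using injM_D[OF g(1)] assms(2) by (auto intro: inj_on_subset)
  ultimately have "(\<lambda>n. if n \<in> B then g n else h n) \<in> injM"
    using if_in_injM[OF assms(2) _ _ h(1)] by blast
  moreover have "h \<in> M_fix B"
    using h(1,2) by (simp add: M_fix_def)
  moreover have "\<forall>a\<in>A. (if a \<in> B then g a else h a) = h a"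
    using g(2) f(2) h(2) by simp
  ultimately show ?thesis
    using that g(1,2) by simp
qed

theorem proposition1p4:
  fixes X :: "'a set" and act :: "(nat \<Rightarrow> nat) \<Rightarrow> 'a \<Rightarrow> 'a"
    and A B :: "nat set" and x :: 'a
  assumes "M_set X act"
    and "A \<subseteq> omega" and "B \<subseteq> omega"
    and "co_infinite A" and "co_infinite B"
    and "x \<in> X"
    and "supported_on act x A" and "supported_on act x B"
  shows "supported_on act x (A \<inter> B)"
  unfolding supported_on_def
proof
  fix f assume "f \<in> M_fix (A \<inter> B)"
  then obtain g k h where chain: "g \<in> injM" "k \<in> injM" "h \<in> M_fix B"
    "\<forall>a\<in>A. g a = f a" "\<forall>b\<in>B. k b = g b" "\<forall>a\<in>A. k a = h a"
    using M_fix_Int_chain assms(2-5) by blast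
  note on_A = supported_action_eq[OF assms(1,6,7,2,4)]
    and on_B = supported_action_eq[OF assms(1,6,8,3,5)]
  have "f \<in> injM" "h \<in> injM"
    using \<open>f \<in> M_fix (A \<inter> B)\<close> chain(3) by (simp_all add: M_fix_def)
  then have "act f x = act g x"
    using on_A[OF chain(1) \<open>f \<in> injM\<close> chain(4)] by simp
  also have "\<dots> = act k x"
    using on_B[OF chain(2,1) chain(5)] by simp
  also have "\<dots> = act h x"
    using on_A[OF chain(2) \<open>h \<in> injM\<close> chain(6)] .
  also have "\<dots> = x"
    using assms(8) chain(3) by (simp add: supported_on_def)
  finally show "act f x = x" .
qed

end
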